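(* Let $R$ be a commutative ring and $I$ an ideal of $R$ with $I=I^2$. Then $I$ has avoidance.
   Context: All rings are commutative with $1\neq 0$. An ideal $I$ of a ring $R$ has avoidance if whenever $I_1,\ldots,I_n$ are finitely many ideals of $R$ with $I\subseteq\bigcup_{k=1}^n I_k$, then $I\subseteq I_k$ for some $k$. *)

theory Defs
  imports "HOL-Algebra.Ideal_Product"
begin

definition has_avoidance :: "('a, 'b) ring_scheme \<Rightarrow> 'a set \<Rightarrow> bool" where
  "has_avoidance R I \<longleftrightarrow>
     (\<forall>(n::nat) (J :: nat \<Rightarrow> 'a set).
        (\<forall>k<n. ideal (J k) R) \<and> I \<subseteq> (\<Union>k<n. J k) \<longrightarrow> (\<exists>k<n. I \<subseteq> J k))"

end

theory Submission
  imports Defs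
begin

text \<open>Shrink the cover to an irredundant one, K_1, ..., K_n. Then every K_i contains an
  element a_i of I lying in no other K_j. Call the depth of z \<in> I the number of K_j containing
  z, and let E_s be the ideal generated by the elements of I of depth at least s. For s < n one
  has E_s E_s \<subseteq> E_(s+1): if x, y have depth at least s but xy has not, then x and y lie in
  the same s members of the cover; choosing K_i outside them, y + a_i lies in yet another K_l,
  and xy = x(y + a_i) - x a_i is a difference of two elements of depth s + 1. Since I = I^2,
  induction gives I \<subseteq> E_(n-1). Finally E_(n-1) \<subseteq> K_i for every i: an element z of
  depth n - 1 outside K_i lies in all other K_j, so z + a_i lies in no member of the cover.\<close>

lemma (in ring) ideal_add_mem_iff:
  assumes "ideal J R" and "x \<in> carrier R" and "y \<in> J"
  shows "x \<oplus> y \<in> J \<longleftrightarrow> x \<in> J"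
proof
  interpret J: ideal J R by fact
  have "y \<in> carrier R" using assms(3) J.Icarr by blast
  assume "x \<oplus> y \<in> J"
  then have "(x \<oplus> y) \<oplus> \<ominus> y \<in> J" using assms(3) by (simp add: J.a_closed J.a_inv_closed)
  moreover have "(x \<oplus> y) \<oplus> \<ominus> y = x" using assms(2) \<open>y \<in> carrier R\<close> by (simp add: a_assoc r_neg)
  ultimately show "x \<in> J" by simp
next
  assume "x \<in> J"
  then show "x \<oplus> y \<in> J" using assms by (simp add: additive_subgroup.a_closed ideal.axioms(1))
qed

lemma (in cring) colon_ideal:
  assumes X: "ideal X R" and c: "c \<in> carrier R"
  shows "ideal {a \<in> carrier R. c \<otimes> a \<in> X} R"
proof (rule idealI)
  interpret X: ideal X R by fact
  show "ring R" by (rule ring_axioms)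
  show "subgroup {a \<in> carrier R. c \<otimes> a \<in> X} (add_monoid R)"
  proof (rule add.subgroupI)
    have "\<zero> \<in> {a \<in> carrier R. c \<otimes> a \<in> X}" using c X.zero_closed by simp
    then show "{a \<in> carrier R. c \<otimes> a \<in> X} \<noteq> {}" by blast
    fix a b assume "a \<in> {a \<in> carrier R. c \<otimes> a \<in> X}" and "b \<in> {a \<in> carrier R. c \<otimes> a \<in> X}"
    then show "\<ominus> a \<in> {a \<in> carrier R. c \<otimes> a \<in> X}" and "a \<oplus> b \<in> {a \<in> carrier R. c \<otimes> a \<in> X}"
      using c by (simp_all add: r_minus r_distr X.a_inv_closed X.a_closed)
  qed auto
  fix a x assume a: "a \<in> {a \<in> carrier R. c \<otimes> a \<in> X}" and x: "x \<in> carrier R"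
  then show "a \<otimes> x \<in> {a \<in> carrier R. c \<otimes> a \<in> X}"
    using c by (simp add: m_assoc[symmetric] X.I_r_closed)
  have "c \<otimes> (x \<otimes> a) = x \<otimes> (c \<otimes> a)" using a x c by (simp add: m_lcomm)
  then show "x \<otimes> a \<in> {a \<in> carrier R. c \<otimes> a \<in> X}" using a x by (simp add: X.I_l_closed)
qed

lemma (in cring) genideal_mult_mem:
  assumes X: "ideal X R" and U: "U \<subseteq> carrier R" and V: "V \<subseteq> carrier R"
    and UV: "\<And>u v. u \<in> U \<Longrightarrow> v \<in> V \<Longrightarrow> u \<otimes> v \<in> X"
    and a: "a \<in> Idl U" and b: "b \<in> Idl V"
  shows "a \<otimes> b \<in> X"
proof -
  have Idl_V: "Idl V \<subseteq> {b \<in> carrier R. u \<otimes> b \<in> X}" if "u \<in> U" for u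
    using that U V UV by (intro genideal_minimal colon_ideal X) auto
  have "a \<in> carrier R" "b \<in> carrier R"
    using a b ideal.Icarr genideal_ideal U V by metis+
  have "U \<subseteq> {a \<in> carrier R. b \<otimes> a \<in> X}"
  proof
    fix u assume "u \<in> U"
    then have "u \<otimes> b \<in> X" "u \<in> carrier R" using Idl_V b U by blast+
    then show "u \<in> {a \<in> carrier R. b \<otimes> a \<in> X}" using \<open>b \<in> carrier R\<close> by (simp add: m_comm)
  qed
  then have "Idl U \<subseteq> {a \<in> carrier R. b \<otimes> a \<in> X}"
    using \<open>b \<in> carrier R\<close> by (intro genideal_minimal colon_ideal X)
  then show ?thesis
    using a \<open>a \<in> carrier R\<close> \<open>b \<in> carrier R\<close> by (auto simp: m_comm)
qed

lemma finite_cover_has_irredundant_subcover: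
  assumes "finite \<J>" and "I \<subseteq> \<Union>\<J>"
  shows "\<exists>\<K>\<subseteq>\<J>. I \<subseteq> \<Union>\<K> \<and> (\<forall>K\<in>\<K>. \<not> I \<subseteq> \<Union>(\<K> - {K}))"
  using assms
proof (induction \<J> rule: finite_psubset_induct)
  case (psubset \<J>)
  show ?case
  proof (cases "\<exists>K\<in>\<J>. I \<subseteq> \<Union>(\<J> - {K})")
    case True
    then obtain K where "K \<in> \<J>" and "I \<subseteq> \<Union>(\<J> - {K})" by blast
    then obtain \<K> where "\<K> \<subseteq> \<J> - {K}" "I \<subseteq> \<Union>\<K>" "\<forall>K\<in>\<K>. \<not> I \<subseteq> \<Union>(\<K> - {K})"
      using psubset.IH[of "\<J> - {K}"] by blast
    then show ?thesis by blast
  next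
    case False
    then show ?thesis using psubset.prems by blast
  qed
qed

locale irredundant_ideal_cover = cring +
  fixes I :: "'a set" and \<K> :: "'a set set"
  assumes ideal_covered: "ideal I R"
    and finite_cover: "finite \<K>"
    and ideal_cover: "K \<in> \<K> \<Longrightarrow> ideal K R"
    and covers: "I \<subseteq> \<Union>\<K>"
    and irredundant: "K \<in> \<K> \<Longrightarrow> \<not> I \<subseteq> \<Union>(\<K> - {K})"
begin

definition containing :: "'a \<Rightarrow> 'a set set"
  where "containing z = {K \<in> \<K>. z \<in> K}"

definition depth_ideal :: "nat \<Rightarrow> 'a set"
  where "depth_ideal s = Idl {z \<in> I. s \<le> card (containing z)}"

lemma containing_subset: "containing z \<subseteq> \<K>"
  unfolding containing_def by blast

lemma finite_containing: "finite (containing z)"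
  using finite_cover containing_subset by (rule finite_subset[rotated])

lemma containing_mult:
  assumes "x \<in> carrier R" and "y \<in> carrier R"
  shows "containing x \<union> containing y \<subseteq> containing (x \<otimes> y)"
proof (unfold containing_def, safe)
  fix K assume "K \<in> \<K>"
  show "x \<otimes> y \<in> K" if "x \<in> K"
    using ideal_cover[OF \<open>K \<in> \<K>\<close>] that assms(2) by (rule ideal.I_r_closed)
  show "x \<otimes> y \<in> K" if "y \<in> K"
    using ideal_cover[OF \<open>K \<in> \<K>\<close>] that assms(1) by (rule ideal.I_l_closed)
qed

lemma private_element:
  assumes "K \<in> \<K>"
  shows "\<exists>a\<in>I. containing a = {K}"
proof -
  obtain a where "a \<in> I" and "a \<notin> \<Union>(\<K> - {K})" using irredundant[OF assms] by blast
  moreover have "a \<in> \<Union>\<K>" using covers \<open>a \<in> I\<close> by blast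
  ultimately have "containing a = {K}" using assms unfolding containing_def by auto
  with \<open>a \<in> I\<close> show ?thesis by blast
qed

lemma shift_by_private_element:
  assumes y: "y \<in> I" and a: "a \<in> I" "containing a = {K}" and yK: "K \<notin> containing y"
  obtains L where "L \<in> containing (y \<oplus> a)" and "L \<notin> insert K (containing y)"
proof -
  interpret I: ideal I R by (rule ideal_covered)
  have carr: "y \<in> carrier R" "a \<in> carrier R" using y a I.Icarr by auto
  have "y \<oplus> a \<in> I" using y a(1) by (rule I.a_closed)
  then obtain L where L: "L \<in> \<K>" "y \<oplus> a \<in> L" using covers by blast
  have "K \<in> \<K>" "a \<in> K" using a(2) unfolding containing_def by auto
  then have "y \<notin> K" using yK unfolding containing_def by blast
  have "L \<in> containing (y \<oplus> a)" using L unfolding containing_def by simp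
  moreover have "L \<noteq> K"
  proof
    assume "L = K"
    then have "y \<in> K"
      using L(2) ideal_add_mem_iff[OF ideal_cover[OF \<open>K \<in> \<K>\<close>] carr(1) \<open>a \<in> K\<close>] by simp
    with \<open>y \<notin> K\<close> show False by contradiction
  qed
  moreover have "L \<notin> containing y"
  proof
    assume "L \<in> containing y"
    then have "y \<in> L" unfolding containing_def by simp
    have "a \<oplus> y \<in> L" using L(2) a_comm[OF carr] by simp
    then have "a \<in> L" using ideal_add_mem_iff[OF ideal_cover[OF L(1)] carr(2) \<open>y \<in> L\<close>] by simp
    then have "L \<in> containing a" using L(1) unfolding containing_def by simp
    then show False using a(2) \<open>L \<noteq> K\<close> by simp
  qed
  ultimately show ?thesis using that by blast
qed

lemma deep_elements_subset_carrier: "{z \<in> I. s \<le> card (containing z)} \<subseteq> carrier R"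
  using ideal.Icarr[OF ideal_covered] by blast

lemma depth_ideal_ideal: "ideal (depth_ideal s) R"
  unfolding depth_ideal_def using deep_elements_subset_carrier by (rule genideal_ideal)

lemma mem_depth_ideal:
  assumes "z \<in> I" and "s \<le> card (containing z)"
  shows "z \<in> depth_ideal s"
proof -
  have "z \<in> {z \<in> I. s \<le> card (containing z)}" using assms by simp
  then show ?thesis unfolding depth_ideal_def using genideal_self[OF deep_elements_subset_carrier] by blast
qed

lemma mem_depth_ideal_Suc:
  assumes "z \<in> I" and "insert L C \<subseteq> containing z" and "L \<notin> C" and "s \<le> card C"
  shows "z \<in> depth_ideal (Suc s)"
proof (rule mem_depth_ideal[OF assms(1)])
  have "C \<subseteq> containing z" using assms(2) by simp
  then have "finite C" using finite_containing by (rule finite_subset)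
  then have "card (insert L C) = Suc (card C)" using assms(3) by simp
  then show "Suc s \<le> card (containing z)"
    using card_mono[OF finite_containing assms(2)] assms(4) by linarith
qed

lemma mult_mem_depth_ideal_Suc:
  assumes s: "s < card \<K>" and x: "x \<in> I" "s \<le> card (containing x)"
    and y: "y \<in> I" "s \<le> card (containing y)"
  shows "x \<otimes> y \<in> depth_ideal (Suc s)"
proof -
  interpret I: ideal I R by (rule ideal_covered)
  have carr: "x \<in> carrier R" "y \<in> carrier R" using x y I.Icarr by auto
  define C where "C = containing x \<union> containing y"
  have C_mult: "C \<subseteq> containing (x \<otimes> y)" unfolding C_def using carr by (rule containing_mult)
  have "finite C" unfolding C_def using finite_containing by blast
  show ?thesis
  proof (cases "Suc s \<le> card C")
    case True
    then show ?thesis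
      using mem_depth_ideal[OF I.I_r_closed[OF x(1) carr(2)]] card_mono[OF finite_containing C_mult]
      by simp
  next
    case False
    have "card (containing x) \<le> card C" "card (containing y) \<le> card C"
      unfolding C_def using finite_containing by (auto intro: card_mono)
    then have "containing x = C" "containing y = C"
      using False x(2) y(2) card_seteq[OF \<open>finite C\<close>] unfolding C_def by (simp_all add: le_simps)
    have "C \<noteq> \<K>" using False s by auto
    moreover have "C \<subseteq> \<K>" unfolding C_def using containing_subset by blast
    ultimately obtain K where K: "K \<in> \<K>" "K \<notin> C" by blast
    obtain a where a: "a \<in> I" "containing a = {K}" using private_element[OF K(1)] by blast
    have a_carr: "a \<in> carrier R" using a I.Icarr by blast
    obtain L where L: "L \<in> containing (y \<oplus> a)" "L \<notin> insert K C"
      using shift_by_private_element[OF y(1) a] K \<open>containing y = C\<close> by metis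
    have "s \<le> card C" using x(2) \<open>containing x = C\<close> by simp
    have "insert L C \<subseteq> containing (x \<otimes> (y \<oplus> a))"
      using L(1) containing_mult[OF carr(1), of "y \<oplus> a"] \<open>containing x = C\<close> carr a_carr by auto
    then have m1: "x \<otimes> (y \<oplus> a) \<in> depth_ideal (Suc s)"
      using mem_depth_ideal_Suc L(2) \<open>s \<le> card C\<close> I.I_r_closed x(1) carr a_carr by simp
    have "insert K C \<subseteq> containing (x \<otimes> a)"
      using containing_mult[OF carr(1) a_carr] a(2) \<open>containing x = C\<close> by auto
    then have m2: "x \<otimes> a \<in> depth_ideal (Suc s)"
      using mem_depth_ideal_Suc K(2) \<open>s \<le> card C\<close> I.I_r_closed x(1) a_carr by simp
    have "x \<otimes> y = x \<otimes> (y \<oplus> a) \<oplus> \<ominus> (x \<otimes> a)"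
      using carr a_carr by (simp add: r_distr a_assoc r_neg)
    then show ?thesis
      using m1 m2 depth_ideal_ideal
      by (simp add: additive_subgroup.a_closed additive_subgroup.a_inv_closed ideal.axioms(1))
  qed
qed

lemma depth_ideal_mult:
  assumes "s < card \<K>" and "a \<in> depth_ideal s" and "b \<in> depth_ideal s"
  shows "a \<otimes> b \<in> depth_ideal (Suc s)"
  using genideal_mult_mem[OF depth_ideal_ideal _ _ _ assms(2,3)[unfolded depth_ideal_def]]
    mult_mem_depth_ideal_Suc[OF assms(1)] ideal.Icarr[OF ideal_covered]
  by blast

lemma depth_ideal_top_subset:
  assumes K: "K \<in> \<K>"
  shows "depth_ideal (card \<K> - 1) \<subseteq> K"
  unfolding depth_ideal_def
proof (rule genideal_minimal[OF ideal_cover[OF K]], safe)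
  fix z assume z: "z \<in> I" and deep: "card \<K> - 1 \<le> card (containing z)"
  show "z \<in> K"
  proof (rule ccontr)
    assume "z \<notin> K"
    then have K_z: "K \<notin> containing z" and sub: "containing z \<subseteq> \<K> - {K}"
      using containing_subset unfolding containing_def by blast+
    have fin: "finite (\<K> - {K})" using finite_cover by simp
    have "card (\<K> - {K}) \<le> card (containing z)" using deep K finite_cover by simp
    then have "containing z = \<K> - {K}" by (rule card_seteq[OF fin sub])
    then have full: "insert K (containing z) = \<K>" using K by blast
    obtain a where "a \<in> I" "containing a = {K}" using private_element[OF K] by blast
    then obtain L where "L \<in> containing (z \<oplus> a)" "L \<notin> insert K (containing z)"
      using shift_by_private_element[OF z _ _ K_z] by blast
    then show False using containing_subset[of "z \<oplus> a"] full by blast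
  qed
qed

lemma idempotent_subset_depth_ideal:
  assumes idem: "I = I \<cdot> I"
  shows "s < card \<K> \<Longrightarrow> I \<subseteq> depth_ideal s"
proof (induction s)
  case 0
  show ?case by (intro subsetI mem_depth_ideal) simp_all
next
  case (Suc s)
  then have s: "s < card \<K>" and IH: "I \<subseteq> depth_ideal s" by simp_all
  have "I <#> I \<subseteq> depth_ideal (Suc s)"
  proof
    fix w assume "w \<in> I <#> I"
    then obtain a b where "a \<in> I" "b \<in> I" "w = a \<otimes> b" unfolding set_mult_def by blast
    then show "w \<in> depth_ideal (Suc s)" using depth_ideal_mult[OF s] IH by blast
  qed
  then have "Idl (I <#> I) \<subseteq> depth_ideal (Suc s)"
    by (rule genideal_minimal[OF depth_ideal_ideal])
  with idem show ?case
    unfolding ideal_prod_eq_genideal[OF ideal_covered ideal_covered] by (rule ord_eq_le_trans)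
qed

lemma idempotent_subset_cover_member:
  assumes "I = I \<cdot> I" and "K \<in> \<K>"
  shows "I \<subseteq> K"
proof -
  have "0 < card \<K>" using assms(2) finite_cover card_gt_0_iff by blast
  then have "card \<K> - 1 < card \<K>" by simp
  then show ?thesis
    using idempotent_subset_depth_ideal[OF assms(1)] depth_ideal_top_subset[OF assms(2)] by blast
qed

end

lemma (in cring) idempotent_ideal_avoidance:
  assumes I: "ideal I R" "I = I \<cdot> I"
    and \<J>: "finite \<J>" "\<And>J. J \<in> \<J> \<Longrightarrow> ideal J R" and cov: "I \<subseteq> \<Union>\<J>"
  shows "\<exists>J\<in>\<J>. I \<subseteq> J"
proof -
  obtain \<K> where \<K>: "\<K> \<subseteq> \<J>" "I \<subseteq> \<Union>\<K>" "\<forall>K\<in>\<K>. \<not> I \<subseteq> \<Union>(\<K> - {K})"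
    using finite_cover_has_irredundant_subcover[OF \<J>(1) cov] by blast
  interpret irredundant_ideal_cover R I \<K>
  proof (intro irredundant_ideal_cover.intro irredundant_ideal_cover_axioms.intro)
    show "cring R" by (rule is_cring)
    show "ideal I R" by (rule I(1))
    show "finite \<K>" using \<K>(1) \<J>(1) by (rule finite_subset)
    show "ideal K R" if "K \<in> \<K>" for K using that \<K>(1) \<J>(2) by blast
    show "I \<subseteq> \<Union>\<K>" by (rule \<K>(2))
    show "\<not> I \<subseteq> \<Union>(\<K> - {K})" if "K \<in> \<K>" for K using that \<K>(3) by blast
  qed
  have "\<zero> \<in> I" using I(1) by (simp add: additive_subgroup.zero_closed ideal.axioms(1))
  then obtain K where "K \<in> \<K>" using \<K>(2) by blast
  then show ?thesis using idempotent_subset_cover_member[OF I(2)] \<K>(1) by blast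
qed

theorem corollary2p2:
  fixes R :: "('a, 'b) ring_scheme" and I :: "'a set"
  assumes "cring R"
    and "\<one>\<^bsub>R\<^esub> \<noteq> \<zero>\<^bsub>R\<^esub>"
    and "ideal I R"
    and "I = I \<cdot>\<^bsub>R\<^esub> I"
  shows "has_avoidance R I"
  unfolding has_avoidance_def
proof (intro allI impI, elim conjE)
  fix n and J :: "nat \<Rightarrow> 'a set"
  assume "\<forall>k<n. ideal (J k) R" and "I \<subseteq> (\<Union>k<n. J k)"
  then obtain K where "K \<in> J ` {..<n}" "I \<subseteq> K"
    using cring.idempotent_ideal_avoidance[OF assms(1,3,4), of "J ` {..<n}"] by blast
  then show "\<exists>k<n. I \<subseteq> J k" by blast
qed

end
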